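(* Let $n$ be a positive integer and $X \in \mathcal{RB}_n$. Then $XL \notin \mathcal{RB}_n$ or $XR \notin \mathcal{RB}_n$.
   Context: $L = \begin{pmatrix} 1 & 0 \\ 1 & 1\end{pmatrix}$, $R = \begin{pmatrix} 1 & 1 \\ 0 & 1\end{pmatrix}$. For a positive integer $n$, $\mathcal{D}_n$ is the set of $2\times 2$ matrices $A$ with nonnegative integer entries, $\det A = n$, and the greatest common divisor of all entries of $A$ equal to $1$. $\mathcal{RB}_n = \left\{ \begin{pmatrix} a & b \\ c & d\end{pmatrix} \in \mathcal{D}_n : a > c \text{ and } d > b\right\}$. *)

theory Defs
  imports "HOL-Analysis.Analysis"
begin

definition mat2 :: "int \<Rightarrow> int \<Rightarrow> int \<Rightarrow> int \<Rightarrow> int^2^2" where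
  "mat2 a b c d = (\<chi> i j. if i = 1 then (if j = 1 then a else b)
                              else (if j = 1 then c else d))"

definition Lmat :: "int^2^2" where "Lmat = mat2 1 0 1 1"
definition Rmat :: "int^2^2" where "Rmat = mat2 1 1 0 1"

definition D_set :: "nat \<Rightarrow> (int^2^2) set" where
  "D_set n = {A. (\<forall>i j. A $ i $ j \<ge> 0) \<and> det A = int n \<and>
      gcd (gcd (A$1$1) (A$1$2)) (gcd (A$2$1) (A$2$2)) = 1}"

definition RB_set :: "nat \<Rightarrow> (int^2^2) set" where
  "RB_set n = {A \<in> D_set n. A$1$1 > A$2$1 \<and> A$2$2 > A$1$2}"

end

theory Submission
  imports Defs
begin

(* Right multiplication by L adds the second column to the first, by R the first column
   to the second.  With X = [[a, b], [c, d]], XL in RB_n forces a + b > c + d through its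
   first column, while XR in RB_n forces c + d > a + b through its second column. *)

lemma mat2_nth [simp]:
  "mat2 a b c d $ 1 $ 1 = a" "mat2 a b c d $ 1 $ 2 = b"
  "mat2 a b c d $ 2 $ 1 = c" "mat2 a b c d $ 2 $ 2 = d"
  by (simp_all add: mat2_def)

lemma matrix_mult_Lmat:
  fixes X :: "int^2^2"
  shows "X ** Lmat = mat2 (X$1$1 + X$1$2) (X$1$2) (X$2$1 + X$2$2) (X$2$2)"
  by (simp add: vec_eq_iff forall_2 matrix_matrix_mult_def Lmat_def mat2_def sum_2)

lemma matrix_mult_Rmat:
  fixes X :: "int^2^2"
  shows "X ** Rmat = mat2 (X$1$1) (X$1$1 + X$1$2) (X$2$1) (X$2$1 + X$2$2)"
  by (simp add: vec_eq_iff forall_2 matrix_matrix_mult_def Rmat_def mat2_def sum_2)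

lemma mat2_in_RB_setD:
  assumes "mat2 a b c d \<in> RB_set n"
  shows "c < a" and "b < d"
  using assms by (simp_all add: RB_set_def)

theorem lemma14:
  fixes n :: nat and X :: "int^2^2"
  assumes "n > 0" and "X \<in> RB_set n"
  shows "X ** Lmat \<notin> RB_set n \<or> X ** Rmat \<notin> RB_set n"
proof (rule ccontr)
  assume "\<not> ?thesis"
  then have "X ** Lmat \<in> RB_set n" and "X ** Rmat \<in> RB_set n"
    by auto
  then have "X$2$1 + X$2$2 < X$1$1 + X$1$2" and "X$1$1 + X$1$2 < X$2$1 + X$2$2"
    unfolding matrix_mult_Lmat matrix_mult_Rmat by (auto dest: mat2_in_RB_setD)
  then show False
    by simp
qed

end
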